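(* Let $\omega\in\mathbb{R}^n$ and let $i\ge 0$ be an index such that $T_{i+1}(\omega)$ is defined. Then $$\frac{1}{T_i(\omega)+T_{i+1}(\omega)}\le\|T_i(\omega)\omega\|_{\mathbb{Z}}\le\frac{1}{T_{i+1}(\omega)^{1/n}}.$$
   Context: For $\omega=(\omega_1,\dots,\omega_n)\in\mathbb{R}^n$, $|\omega|=\max_i|\omega_i|$ and $\|\omega\|_{\mathbb{Z}}=\min_{k\in\mathbb{Z}^n}|\omega-k|$. The periods of $\omega$ are defined by $T_0(\omega)=1$ and $T_{i+1}(\omega)=\min\{T\in\mathbb{N},\,T\ge 1:\|T\omega\|_{\mathbb{Z}}<\|T_i(\omega)\omega\|_{\mathbb{Z}}\}$ (defined whenever this set is nonempty). *)

theory Defs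
  imports "HOL-Analysis.Analysis"
begin

definition supnorm :: "real ^ 'n \<Rightarrow> real" where
  "supnorm x = Max (range (\<lambda>i. \<bar>x $ i\<bar>))"

definition normZ :: "real ^ 'n \<Rightarrow> real" where
  "normZ w = (INF k \<in> {k :: real ^ 'n. \<forall>i. k $ i \<in> \<int>}. supnorm (w - k))"

fun period :: "real ^ 'n \<Rightarrow> nat \<Rightarrow> nat option" where
  "period w 0 = Some 1"
| "period w (Suc i) =
     (case period w i of
        None \<Rightarrow> None
      | Some t \<Rightarrow>
          (if \<exists>T::nat. T \<ge> 1 \<and> normZ (real T *\<^sub>R w) < normZ (real t *\<^sub>R w)
           then Some (LEAST T::nat. T \<ge> 1 \<and> normZ (real T *\<^sub>R w) < normZ (real t *\<^sub>R w))
           else None))"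

end

theory Submission
  imports Defs
begin

text \<open>Since \<open>T\<^sub>i < T\<^sub>i\<^sub>+\<^sub>1\<close> and \<open>T\<^sub>i\<^sub>+\<^sub>1 \<omega>\<close> is strictly closer to the lattice than \<open>T\<^sub>i \<omega>\<close>, a
  \<open>2 \<times> 2\<close> integer determinant built from the two lattice offsets in a worst coordinate is nonzero,
  giving the lower bound. For the upper bound, minimality of \<open>T\<^sub>i\<^sub>+\<^sub>1\<close> says that
  \<open>\<parallel>T \<omega>\<parallel> \<ge> \<parallel>T\<^sub>i \<omega>\<parallel>\<close> for all \<open>1 \<le> T < T\<^sub>i\<^sub>+\<^sub>1\<close>, and a Dirichlet-type volume argument on the
  torus turns this into \<open>T\<^sub>i\<^sub>+\<^sub>1 \<parallel>T\<^sub>i \<omega>\<parallel>\<^sup>n \<le> 1\<close>.\<close>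

lemma abs_component_le_supnorm: "\<bar>x $ i\<bar> \<le> supnorm x"
  unfolding supnorm_def by (rule Max_ge) auto

lemma supnorm_attained: "\<exists>j. supnorm x = \<bar>x $ j\<bar>"
proof -
  have "Max (range (\<lambda>i. \<bar>x $ i\<bar>)) \<in> range (\<lambda>i. \<bar>x $ i\<bar>)"
    by (rule Max_in) auto
  then show ?thesis unfolding supnorm_def by blast
qed

lemma supnorm_le_iff: "supnorm x \<le> c \<longleftrightarrow> (\<forall>i. \<bar>x $ i\<bar> \<le> c)"
  by (metis abs_component_le_supnorm supnorm_attained order_trans)

lemma supnorm_less_iff: "supnorm x < c \<longleftrightarrow> (\<forall>i. \<bar>x $ i\<bar> < c)"
  by (metis abs_component_le_supnorm supnorm_attained order_le_less_trans)

definition round_vec :: "real ^ 'n \<Rightarrow> real ^ 'n" where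
  "round_vec v = (\<chi> i. of_int (round (v $ i)))"

lemma normZ_eq_supnorm_round: "normZ v = supnorm (v - round_vec v)"
  unfolding normZ_def
proof (rule cInf_eq_minimum)
  show "supnorm (v - round_vec v) \<in> (\<lambda>k. supnorm (v - k)) ` {k. \<forall>i. k $ i \<in> \<int>}"
    by (rule imageI) (auto simp: round_vec_def)
next
  fix x assume "x \<in> (\<lambda>k. supnorm (v - k)) ` {k. \<forall>i. k $ i \<in> \<int>}"
  then obtain k where k: "\<forall>i. k $ i \<in> \<int>" and x: "x = supnorm (v - k)" by auto
  have "\<bar>(v - round_vec v) $ i\<bar> \<le> supnorm (v - k)" for i
  proof -
    obtain m where "k $ i = of_int m" using k by (metis Ints_cases)
    then have "\<bar>(v - round_vec v) $ i\<bar> \<le> \<bar>(v - k) $ i\<bar>"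
      using round_diff_minimal[of "v $ i" m] by (simp add: round_vec_def)
    also have "\<dots> \<le> supnorm (v - k)" by (rule abs_component_le_supnorm)
    finally show ?thesis .
  qed
  then show "supnorm (v - round_vec v) \<le> x" unfolding x by (simp add: supnorm_le_iff)
qed

lemma normZ_nonneg: "0 \<le> normZ v"
  unfolding normZ_eq_supnorm_round by (meson abs_ge_zero abs_component_le_supnorm order_trans)

lemma normZ_le_half: "normZ v \<le> 1/2"
  unfolding normZ_eq_supnorm_round supnorm_le_iff
  using of_int_round_abs_le[where 'a = real] by (simp add: round_vec_def abs_minus_commute)

lemma normZ_less_iff:
  fixes v :: "real ^ 'n"
  shows "normZ v < c \<longleftrightarrow> (\<exists>m :: 'n \<Rightarrow> int. \<forall>i. \<bar>v $ i - of_int (m i)\<bar> < c)"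
proof
  assume "normZ v < c"
  then show "\<exists>m. \<forall>i. \<bar>v $ i - of_int (m i)\<bar> < c"
    unfolding normZ_eq_supnorm_round supnorm_less_iff by (auto simp: round_vec_def)
next
  assume "\<exists>m. \<forall>i. \<bar>v $ i - of_int (m i)\<bar> < c"
  then obtain m where m: "\<And>i. \<bar>v $ i - of_int (m i)\<bar> < c" by blast
  have "\<bar>(v - round_vec v) $ i\<bar> < c" for i
    using round_diff_minimal[of "v $ i" "m i"] m[of i] by (simp add: round_vec_def)
  then show "normZ v < c" unfolding normZ_eq_supnorm_round supnorm_less_iff by blast
qed

lemma period_SucD:
  assumes "period w i = Some t" "period w (Suc i) = Some t'"
  shows "1 \<le> t'" and "normZ (real t' *\<^sub>R w) < normZ (real t *\<^sub>R w)"
    and "\<And>T. 1 \<le> T \<Longrightarrow> T < t' \<Longrightarrow> normZ (real t *\<^sub>R w) \<le> normZ (real T *\<^sub>R w)"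
proof -
  let ?P = "\<lambda>T::nat. 1 \<le> T \<and> normZ (real T *\<^sub>R w) < normZ (real t *\<^sub>R w)"
  have ex: "\<exists>T. ?P T" and t': "t' = (LEAST T. ?P T)"
    using assms by (auto split: if_splits)
  have "?P t'" unfolding t' by (rule LeastI_ex[OF ex])
  then show "1 \<le> t'" "normZ (real t' *\<^sub>R w) < normZ (real t *\<^sub>R w)" by auto
  fix T :: nat assume "1 \<le> T" "T < t'"
  then show "normZ (real t *\<^sub>R w) \<le> normZ (real T *\<^sub>R w)"
    using not_less_Least[of T ?P] unfolding t' by linarith
qed

lemma period_minimal:
  "period w i = Some t \<Longrightarrow>
    1 \<le> t \<and> (\<forall>T. 1 \<le> T \<longrightarrow> T < t \<longrightarrow> normZ (real t *\<^sub>R w) < normZ (real T *\<^sub>R w))"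
proof (induction i arbitrary: t)
  case 0
  then show ?case by simp
next
  case (Suc i)
  then obtain s where "period w i = Some s" by (cases "period w i") auto
  from period_SucD[OF this Suc.prems] show ?case by fastforce
qed

lemma period_less_Suc:
  assumes "period w i = Some t" "period w (Suc i) = Some t'"
  shows "t < t'"
proof (rule ccontr)
  assume "\<not> t < t'"
  then have "normZ (real t *\<^sub>R w) \<le> normZ (real t' *\<^sub>R w)"
    using period_minimal[OF assms(1)] period_SucD(1)[OF assms] by (cases "t = t'") auto
  then show False using period_SucD(2)[OF assms] by simp
qed

text \<open>With \<open>x, y\<close> the lattice offsets of \<open>t w, t' w\<close> in a coordinate \<open>j\<close> where \<open>x\<close> is extremal,
  \<open>t y - t' x\<close> is an integer of absolute value at most \<open>(t + t') \<bar>x\<bar>\<close>; if this is \<open>< 1\<close> it vanishes,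
  forcing \<open>\<bar>y\<bar> = (t'/t) \<bar>x\<bar> \<ge> \<bar>x\<bar>\<close>.\<close>

lemma normZ_lower_bound:
  fixes w :: "real ^ 'n" and t t' :: nat
  assumes "1 \<le> t" "t \<le> t'" and less: "normZ (real t' *\<^sub>R w) < normZ (real t *\<^sub>R w)"
  shows "1 / (real t + real t') \<le> normZ (real t *\<^sub>R w)"
proof (rule ccontr)
  define \<delta> where "\<delta> = normZ (real t *\<^sub>R w)"
  define x where "x = real t *\<^sub>R w - round_vec (real t *\<^sub>R w)"
  define y where "y = real t' *\<^sub>R w - round_vec (real t' *\<^sub>R w)"
  assume "\<not> ?thesis"
  then have small: "(real t + real t') * \<delta> < 1"
    using assms(1) unfolding \<delta>_def by (simp add: field_simps)
  obtain j where xj: "\<delta> = \<bar>x $ j\<bar>"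
    using supnorm_attained[of x] unfolding \<delta>_def x_def normZ_eq_supnorm_round by blast
  have yj: "\<bar>y $ j\<bar> < \<delta>"
    using abs_component_le_supnorm[of y j] less unfolding \<delta>_def y_def normZ_eq_supnorm_round
    by linarith
  define d where "d = real t * y $ j - real t' * x $ j"
  have d_int: "d = of_int (int t' * round (real t * w $ j) - int t * round (real t' * w $ j))"
    unfolding d_def x_def y_def round_vec_def by (simp add: algebra_simps)
  have "\<bar>d\<bar> \<le> real t * \<bar>y $ j\<bar> + real t' * \<bar>x $ j\<bar>"
    unfolding d_def using abs_triangle_ineq4[of "real t * y $ j" "real t' * x $ j"]
    by (simp add: abs_mult)
  also have "\<dots> \<le> (real t + real t') * \<delta>"
    using yj xj by (simp add: algebra_simps mult_left_mono)
  finally have "\<bar>d\<bar> < 1" using small by linarith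
  then have "d = 0"
    unfolding d_int by (metis of_int_0 of_int_abs of_int_less_1_iff zabs_less_one_iff)
  then have "real t * \<bar>y $ j\<bar> = real t' * \<delta>"
    unfolding d_def xj by (metis abs_mult abs_of_nat eq_iff_diff_eq_0)
  moreover have "real t * \<delta> \<le> real t' * \<delta>"
    using assms(2) xj by (simp add: mult_right_mono)
  moreover have "real t * \<bar>y $ j\<bar> < real t * \<delta>"
    using yj assms(1) by simp
  ultimately show False by linarith
qed

text \<open>If \<open>normZ (T w) \<ge> \<delta>\<close> for \<open>1 \<le> T < M\<close>, the cubes \<open>a w + [0, \<delta>)\<^sup>n\<close>, \<open>a < M\<close>, are disjoint
  modulo \<open>\<int>\<^sup>n\<close>, so \<open>M \<delta>\<^sup>n \<le> 1\<close>. The volume argument is replaced by counting the points of the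
  grid \<open>(1/N) \<int>\<^sup>n\<close> (taken modulo \<open>N\<close>) lying in these cubes, then letting \<open>N \<rightarrow> \<infinity>\<close>.\<close>

definition grid_window :: "nat \<Rightarrow> nat \<Rightarrow> real \<Rightarrow> int set" where
  "grid_window N k x = (\<lambda>g. g mod int N) ` {\<lceil>real N * x\<rceil> ..< \<lceil>real N * x\<rceil> + int k}"

lemma inj_on_mod_interval:
  assumes "k \<le> N" "0 < N"
  shows "inj_on (\<lambda>g::int. g mod N) {c ..< c + k}"
proof (rule inj_onI)
  fix g g' assume "g \<in> {c ..< c + k}" "g' \<in> {c ..< c + k}" "g mod N = g' mod N"
  then have dvd: "N dvd g - g'" and less: "\<bar>g - g'\<bar> < N"
    using assms by (auto simp: mod_eq_dvd_iff)
  show "g = g'"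
  proof (rule ccontr)
    assume "g \<noteq> g'"
    then have "\<bar>N\<bar> \<le> \<bar>g - g'\<bar>" using dvd_imp_le_int[OF _ dvd] by simp
    then show False using less by simp
  qed
qed

lemma card_grid_window: "k \<le> N \<Longrightarrow> 0 < N \<Longrightarrow> card (grid_window N k x) = k"
  unfolding grid_window_def by (subst card_image) (auto intro: inj_on_mod_interval)

lemma grid_window_subset: "0 < N \<Longrightarrow> grid_window N k x \<subseteq> {0 ..< int N}"
  unfolding grid_window_def by auto

lemma grid_interval_bounds:
  assumes "g \<in> {\<lceil>y\<rceil> ..< \<lceil>y\<rceil> + int k}"
  shows "y \<le> of_int g" "of_int g < y + real k"
proof -
  have "y \<le> of_int \<lceil>y\<rceil>" "of_int \<lceil>y\<rceil> < y + 1" by linarith+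
  moreover have "of_int \<lceil>y\<rceil> \<le> real_of_int g" "real_of_int g + 1 \<le> of_int \<lceil>y\<rceil> + real k"
    using assms by (simp_all flip: of_int_le_iff)
  ultimately show "y \<le> of_int g" "of_int g < y + real k" by linarith+
qed

lemma grid_window_overlap:
  assumes "0 < N" "real k \<le> real N * \<delta>"
    and "h \<in> grid_window N k x" "h \<in> grid_window N k y"
  shows "\<exists>q::int. \<bar>x - y - of_int q\<bar> < \<delta>"
proof -
  obtain g g' where g: "g \<in> {\<lceil>real N * x\<rceil> ..< \<lceil>real N * x\<rceil> + int k}"
    and g': "g' \<in> {\<lceil>real N * y\<rceil> ..< \<lceil>real N * y\<rceil> + int k}"
    and "g mod int N = g' mod int N"
    using assms(3,4) unfolding grid_window_def by auto
  then obtain q where q: "g - g' = int N * q" by (metis dvd_def mod_eq_dvd_iff)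
  have "real N * (x - y - of_int q) = (real N * x - of_int g) - (real N * y - of_int g')"
    using arg_cong[OF q, of real_of_int] by (simp add: algebra_simps)
  also have "\<bar>\<dots>\<bar> < real N * \<delta>"
    using grid_interval_bounds[OF g] grid_interval_bounds[OF g'] assms(2)
    unfolding abs_less_iff by linarith
  finally have "real N * \<bar>x - y - of_int q\<bar> < real N * \<delta>"
    by (simp add: abs_mult)
  then show ?thesis using assms(1) by (auto simp: mult_less_cancel_left_pos)
qed

lemma normZ_less_if_grid_windows_meet:
  fixes w :: "real ^ 'n" and a b N k :: nat
  assumes "0 < N" "real k \<le> real N * \<delta>"
    and "h \<in> Pi\<^sub>E UNIV (\<lambda>i. grid_window N k (real a * w $ i))"
    and "h \<in> Pi\<^sub>E UNIV (\<lambda>i. grid_window N k (real b * w $ i))"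
  shows "normZ ((real a - real b) *\<^sub>R w) < \<delta>"
proof -
  have "\<forall>i. \<exists>q::int. \<bar>real a * w $ i - real b * w $ i - of_int q\<bar> < \<delta>"
    using grid_window_overlap[OF assms(1,2)] assms(3,4) by (blast dest: PiE_mem)
  then obtain q :: "'n \<Rightarrow> int" where "\<And>i. \<bar>real a * w $ i - real b * w $ i - of_int (q i)\<bar> < \<delta>"
    by (metis choice)
  then show ?thesis unfolding normZ_less_iff by (auto simp: left_diff_distrib)
qed

lemma card_grid_points_bound:
  fixes w :: "real ^ 'n" and M N k :: nat
  assumes "0 < N" "k \<le> N" "real k \<le> real N * \<delta>"
    and far: "\<And>T. 1 \<le> T \<Longrightarrow> T < M \<Longrightarrow> \<delta> \<le> normZ (real T *\<^sub>R w)"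
  shows "M * k ^ CARD('n) \<le> N ^ CARD('n)"
proof -
  define S where "S a = Pi\<^sub>E UNIV (\<lambda>i. grid_window N k (real a * w $ i))" for a :: nat
  define B where "B = Pi\<^sub>E (UNIV :: 'n set) (\<lambda>_. {0 ..< int N})"
  have S_sub: "S a \<subseteq> B" for a
    unfolding S_def B_def using grid_window_subset[OF assms(1)] by (auto simp: PiE_iff)
  have finB: "finite B" unfolding B_def by (simp add: finite_PiE)
  have disjoint_after: "S a \<inter> S b = {}" if "b < a" "a < M" for a b
  proof (rule ccontr)
    assume "S a \<inter> S b \<noteq> {}"
    then obtain h where "h \<in> S a" "h \<in> S b" by blast
    moreover have "real (a - b) = real a - real b" using that by simp
    ultimately have "normZ (real (a - b) *\<^sub>R w) < \<delta>"
      using normZ_less_if_grid_windows_meet[OF assms(1,3)] unfolding S_def by simp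
    moreover have "\<delta> \<le> normZ (real (a - b) *\<^sub>R w)"
      using that by (intro far) auto
    ultimately show False by simp
  qed
  have "M * k ^ CARD('n) = (\<Sum>a<M. card (S a))"
    unfolding S_def using card_grid_window[OF assms(2,1)] by (simp add: card_PiE)
  also have "\<dots> = card (\<Union>a<M. S a)"
  proof (rule card_UN_disjoint[symmetric])
    show "\<forall>a\<in>{..<M}. finite (S a)" using finite_subset[OF S_sub finB] by blast
    show "\<forall>a\<in>{..<M}. \<forall>b\<in>{..<M}. a \<noteq> b \<longrightarrow> S a \<inter> S b = {}"
      using disjoint_after by (metis Int_commute lessThan_iff linorder_neqE_nat)
  qed simp
  also have "\<dots> \<le> card B"
    using S_sub by (intro card_mono[OF finB]) blast
  also have "\<dots> = N ^ CARD('n)"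
    unfolding B_def by (simp add: card_PiE)
  finally show ?thesis .
qed

lemma dirichlet_volume_bound:
  fixes w :: "real ^ 'n" and M :: nat
  assumes "0 < \<delta>" "\<delta> \<le> 1"
    and far: "\<And>T. 1 \<le> T \<Longrightarrow> T < M \<Longrightarrow> \<delta> \<le> normZ (real T *\<^sub>R w)"
  shows "real M * \<delta> ^ CARD('n) \<le> 1"
proof -
  have approx: "real M * (\<delta> - 1 / real N) ^ CARD('n) \<le> 1" if "1 \<le> real N * \<delta>" for N :: nat
  proof -
    define k where "k = nat \<lfloor>real N * \<delta>\<rfloor>"
    have N: "0 < N" using that by (auto intro: Nat.gr0I)
    have k: "real k \<le> real N * \<delta>" "real N * \<delta> - 1 \<le> real k"
      unfolding k_def using that by linarith+
    have "real N * \<delta> \<le> real N" using assms(2) by (simp add: mult_left_le)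
    then have "k \<le> N" using k(1) by linarith
    then have "real M * real k ^ CARD('n) \<le> real N ^ CARD('n)"
      using card_grid_points_bound[OF N _ k(1) far] by (metis of_nat_le_iff of_nat_mult of_nat_power)
    have "real N * (\<delta> - 1 / real N) = real N * \<delta> - 1"
      using N by (simp add: right_diff_distrib)
    then have "real N * (\<delta> - 1 / real N) \<le> real k" using k(2) by simp
    moreover have "0 \<le> \<delta> - 1 / real N" using that N by (simp add: field_simps)
    ultimately have "(real N * (\<delta> - 1 / real N)) ^ CARD('n) \<le> real k ^ CARD('n)"
      by (intro power_mono) simp_all
    then have "real N ^ CARD('n) * (real M * (\<delta> - 1 / real N) ^ CARD('n)) \<le> real M * real k ^ CARD('n)"
      by (simp add: power_mult_distrib mult.left_commute mult_left_mono)
    also have "\<dots> \<le> real N ^ CARD('n) * 1"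
      using \<open>real M * real k ^ CARD('n) \<le> real N ^ CARD('n)\<close> by simp
    finally show ?thesis using N by simp
  qed
  obtain N0 :: nat where N0: "1 / \<delta> \<le> real N0"
    using real_arch_simple by blast
  have "\<forall>N\<ge>N0. real M * (\<delta> - 1 / real N) ^ CARD('n) \<le> 1"
  proof (intro allI impI approx)
    fix N assume "N0 \<le> N"
    then have "1 / \<delta> \<le> real N" using N0 by linarith
    then show "1 \<le> real N * \<delta>" using assms(1) by (simp add: field_simps)
  qed
  moreover have "(\<lambda>N. real M * (\<delta> - 1 / real N) ^ CARD('n)) \<longlonglongrightarrow> real M * (\<delta> - 0) ^ CARD('n)"
    by (intro tendsto_intros lim_1_over_n)
  ultimately show ?thesis
    using Lim_bounded by simp
qed

lemma le_one_div_root: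
  fixes d x :: real and n :: nat
  assumes "0 < d" "0 < x" "1 \<le> n" "x * d ^ n \<le> 1"
  shows "d \<le> 1 / x powr (1 / real n)"
proof -
  have "d = (d ^ n) powr (1 / real n)"
    using assms by (simp add: powr_realpow[symmetric] powr_powr)
  also have "\<dots> \<le> (1 / x) powr (1 / real n)"
    using assms by (intro powr_mono2) (auto simp: field_simps)
  also have "\<dots> = 1 / x powr (1 / real n)"
    using assms by (simp add: powr_divide)
  finally show ?thesis .
qed

theorem mainTheorem2:
  fixes w :: "real ^ 'n" and i t t' :: nat
  assumes "period w i = Some t"
    and "period w (Suc i) = Some t'"
  shows "1 / (real t + real t') \<le> normZ (real t *\<^sub>R w)
       \<and> normZ (real t *\<^sub>R w) \<le> 1 / (real t' powr (1 / real CARD('n)))"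
proof
  note next_period = period_SucD[OF assms]
  show "1 / (real t + real t') \<le> normZ (real t *\<^sub>R w)"
    using normZ_lower_bound period_minimal[OF assms(1)] period_less_Suc[OF assms] next_period(2)
    by (meson less_imp_le)
  have "0 < normZ (real t *\<^sub>R w)"
    using next_period(2) normZ_nonneg[of "real t' *\<^sub>R w"] by linarith
  moreover have "real t' * normZ (real t *\<^sub>R w) ^ CARD('n) \<le> 1"
    using calculation normZ_le_half[of "real t *\<^sub>R w"] next_period(3)
    by (intro dirichlet_volume_bound) auto
  moreover have "0 < real t'" "1 \<le> CARD('n)"
    using next_period(1) by (simp_all add: Suc_le_eq)
  ultimately show "normZ (real t *\<^sub>R w) \<le> 1 / (real t' powr (1 / real CARD('n)))"
    using le_one_div_root by blast
qed

end
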